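(* Let $(X,\tau)$ be a $\mathbb{B}$-topological space. (i) For every inhabited, saturated and compact $\theta\in\mathbb{B}^X$, the map $\mathrm{sub}_X(\theta,-)\colon\tau\to\mathbb{B}$ is a Scott open $\mathbb{B}$-filter of $\tau$. (ii) For all inhabited, saturated and compact $\theta_1,\theta_2\in\mathbb{B}^X$, $$\mathrm{sub}_X(\theta_2,\theta_1)=\bigwedge_{\lambda\in\tau}\big(\mathrm{sub}_X(\theta_1,\lambda)\to\mathrm{sub}_X(\theta_2,\lambda)\big).$$ (iii) If $(X,\tau)$ is $\mathbb{B}$-sober, then for every Scott open $\mathbb{B}$-filter $F$ of $\tau$ there is a unique inhabited, saturated and compact $\theta\in\mathbb{B}^X$ such that $F(\lambda)=\mathrm{sub}_X(\theta,\lambda)$ for all $\lambda\in\tau$.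
   Context: $\mathbb{B}=\{0,1,tt,ff\}$ is the four-element Boolean algebra with bottom $0$, top $1$, and $tt,ff$ incomparable and complements of each other; $\neg$ is its complement and $a\to b=\neg a\vee b$. For a set $X$, $\mathbb{B}^X$ is the set of maps $X\to\mathbb{B}$ with pointwise order and operations; for $b\in\mathbb{B}$, $b_X$ is the constant map with value $b$; for $x\in X$, $1_x$ is the map sending $x$ to $1$ and all other points to $0$. A $\mathbb{B}$-topology on $X$ is a subset $\tau\subseteq\mathbb{B}^X$ containing all constant maps and closed under arbitrary pointwise joins and finite pointwise meets; its elements are open sets. For $\lambda,\mu\in\mathbb{B}^X$, $\mathrm{sub}_X(\lambda,\mu)=\bigwedge_{x\in X}(\lambda(x)\to\mu(x))$. The specialization $\mathbb{B}$-order is $\Omega(\tau)(x,y)=\bigwedge_{\lambda\in\tau}(\lambda(x)\to\lambda(y))$. $\theta\in\mathbb{B}^X$ is inhabited if $\bigvee_{x\in X}\theta(x)=1$; saturated if $\Omega(\tau)(x,y)\le\theta(x)\to\theta(y)$ for all $x,y\in X$; compact if for every family $\Lambda\subseteq\tau$ directed with respect to the pointwise order, $\mathrm{sub}_X(\theta,\bigvee\Lambda)=\bigvee_{\lambda\in\Lambda}\mathrm{sub}_X(\theta,\lambda)$. A $\mathbb{B}$-filter of $\tau$ is a map $F\colon\tau\to\mathbb{B}$ with $F(b_X)=b$ for all $b\in\mathbb{B}$ and $F(\lambda\wedge\mu)=F(\lambda)\wedge F(\mu)$ for all $\lambda,\mu\in\tau$; it is Scott open if moreover $F(\bigvee\Lambda)=\bigvee_{\lambda\in\Lambda}F(\lambda)$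 for every directed $\Lambda\subseteq\tau$. A $\mathbb{B}$-point of $\tau$ is a frame homomorphism $p\colon\tau\to\mathbb{B}$ (preserving finite meets and arbitrary joins) with $p(b_X)=b$ for all $b\in\mathbb{B}$. $(X,\tau)$ is $\mathbb{B}$-sober if for every $\mathbb{B}$-point $p$ of $\tau$ there is a unique $x\in X$ with $p(\lambda)=\lambda(x)$ for all $\lambda\in\tau$. *)

theory Defs
  imports Main "HOL-Library.Product_Order"
begin

text \<open>The four-element Boolean algebra B = {0,1,tt,ff}, realised as bool x bool with the
product order: 0 = bot = (False,False), 1 = top = (True,True), tt = (True,False),
ff = (False,True); complement is uminus, joins/meets are sup/inf (componentwise).\<close>

type_synonym B = "bool \<times> bool"

definition tt :: B where "tt = (True, False)"
definition ff :: B where "ff = (False, True)"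

definition Bimp :: "B \<Rightarrow> B \<Rightarrow> B" where
  "Bimp a b = sup (- a) b"

text \<open>Maps X -> B are functions on the type 'a (X = UNIV), ordered pointwise.\<close>

definition is_Btop :: "('a \<Rightarrow> B) set \<Rightarrow> bool" where
  "is_Btop \<tau> \<longleftrightarrow>
     (\<forall>b::B. (\<lambda>_. b) \<in> \<tau>) \<and>
     (\<forall>S. S \<subseteq> \<tau> \<longrightarrow> Sup S \<in> \<tau>) \<and>
     (\<forall>l m. l \<in> \<tau> \<longrightarrow> m \<in> \<tau> \<longrightarrow> inf l m \<in> \<tau>)"

definition Bsub :: "('a \<Rightarrow> B) \<Rightarrow> ('a \<Rightarrow> B) \<Rightarrow> B" where
  "Bsub l m = (INF x. Bimp (l x) (m x))"

definition Bspec :: "('a \<Rightarrow> B) set \<Rightarrow> 'a \<Rightarrow> 'a \<Rightarrow> B" where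
  "Bspec \<tau> x y = (INF l\<in>\<tau>. Bimp (l x) (l y))"

definition Binhabited :: "('a \<Rightarrow> B) \<Rightarrow> bool" where
  "Binhabited \<theta> \<longleftrightarrow> (SUP x. \<theta> x) = top"

definition Bsaturated :: "('a \<Rightarrow> B) set \<Rightarrow> ('a \<Rightarrow> B) \<Rightarrow> bool" where
  "Bsaturated \<tau> \<theta> \<longleftrightarrow> (\<forall>x y. Bspec \<tau> x y \<le> Bimp (\<theta> x) (\<theta> y))"

definition directed :: "('a \<Rightarrow> B) set \<Rightarrow> bool" where
  "directed L \<longleftrightarrow> L \<noteq> {} \<and> (\<forall>a\<in>L. \<forall>b\<in>L. \<exists>c\<in>L. a \<le> c \<and> b \<le> c)"

definition Bcompact :: "('a \<Rightarrow> B) set \<Rightarrow> ('a \<Rightarrow> B) \<Rightarrow> bool" where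
  "Bcompact \<tau> \<theta> \<longleftrightarrow>
     (\<forall>L. L \<subseteq> \<tau> \<longrightarrow> directed L \<longrightarrow> Bsub \<theta> (Sup L) = (SUP l\<in>L. Bsub \<theta> l))"

definition Bfilter :: "('a \<Rightarrow> B) set \<Rightarrow> (('a \<Rightarrow> B) \<Rightarrow> B) \<Rightarrow> bool" where
  "Bfilter \<tau> F \<longleftrightarrow>
     (\<forall>b::B. F (\<lambda>_. b) = b) \<and>
     (\<forall>l m. l \<in> \<tau> \<longrightarrow> m \<in> \<tau> \<longrightarrow> F (inf l m) = inf (F l) (F m))"

definition Bscott_open_filter :: "('a \<Rightarrow> B) set \<Rightarrow> (('a \<Rightarrow> B) \<Rightarrow> B) \<Rightarrow> bool" where
  "Bscott_open_filter \<tau> F \<longleftrightarrow>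
     Bfilter \<tau> F \<and>
     (\<forall>L. L \<subseteq> \<tau> \<longrightarrow> directed L \<longrightarrow> F (Sup L) = (SUP l\<in>L. F l))"

definition Bpoint :: "('a \<Rightarrow> B) set \<Rightarrow> (('a \<Rightarrow> B) \<Rightarrow> B) \<Rightarrow> bool" where
  "Bpoint \<tau> p \<longleftrightarrow>
     (\<forall>b::B. p (\<lambda>_. b) = b) \<and>
     (\<forall>l m. l \<in> \<tau> \<longrightarrow> m \<in> \<tau> \<longrightarrow> p (inf l m) = inf (p l) (p m)) \<and>
     (\<forall>S. S \<subseteq> \<tau> \<longrightarrow> p (Sup S) = (SUP l\<in>S. p l))"

definition Bsober :: "('a \<Rightarrow> B) set \<Rightarrow> bool" where
  "Bsober \<tau> \<longleftrightarrow> (\<forall>p. Bpoint \<tau> p \<longrightarrow> (\<exists>!x. \<forall>l\<in>\<tau>. p l = l x))"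

end

theory Submission
  imports Defs
begin

text \<open>Since \<open>B\<close> is the powerset of its two atoms \<open>tt\<close> and \<open>ff\<close>, every identity between
  \<open>B\<close>-values may be checked atom by atom, and for an atom \<open>c\<close> the test \<open>c \<le> -\<close> turns joins,
  meets, complements and implications into their classical counterparts. At each atom, (i) and (ii)
  are the classical facts that a compact saturated set gives a Scott open filter of opens and is
  the intersection of its open neighbourhoods. For (iii) the candidate is
  \<open>\<theta>(x) = \<Sqinter>\<^sub>\<lambda> F(\<lambda>) \<rightarrow> \<lambda>(x)\<close>; the inequality \<open>Bsub \<theta> \<lambda> \<le> F \<lambda>\<close> is the Hofmann--Mislove
  argument: by Zorn and Scott openness an open \<open>\<lambda>\<close> with \<open>c \<nleq> F \<lambda>\<close> lies in a maximal open \<open>P\<close>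
  with \<open>c \<nleq> F P\<close>, the filter property makes the complement of \<open>P\<close> prime at level \<open>c\<close>, hence a
  \<open>B\<close>-point, and sobriety yields a point of \<open>\<theta>\<close> outside \<open>\<lambda>\<close>. Uniqueness follows from (ii).\<close>

definition B_atom :: "B \<Rightarrow> bool" where
  "B_atom c \<longleftrightarrow> c = tt \<or> c = ff"

lemma B_atom_tt: "B_atom tt"
  by (simp add: B_atom_def)

lemma B_atom_uminus: "B_atom c \<Longrightarrow> B_atom (- c)"
  by (auto simp: B_atom_def tt_def ff_def)

lemma tt_le_iff: "tt \<le> a \<longleftrightarrow> fst a"
  by (cases a) (auto simp: tt_def)

lemma ff_le_iff: "ff \<le> a \<longleftrightarrow> snd a"
  by (cases a) (auto simp: ff_def)

lemma atom_le_sup_iff: "B_atom c \<Longrightarrow> c \<le> sup a b \<longleftrightarrow> c \<le> a \<or> c \<le> b"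
  by (auto simp: B_atom_def tt_le_iff ff_le_iff)

lemma atom_le_uminus_iff: "B_atom c \<Longrightarrow> c \<le> - a \<longleftrightarrow> \<not> c \<le> a"
  by (cases a) (auto simp: B_atom_def tt_le_iff ff_le_iff)

lemma atom_le_SUP_iff: "B_atom c \<Longrightarrow> c \<le> (SUP i\<in>I. f i) \<longleftrightarrow> (\<exists>i\<in>I. c \<le> f i)"
  by (force simp: B_atom_def tt_le_iff ff_le_iff fst_Sup snd_Sup)

lemma atom_not_le_bot: "B_atom c \<Longrightarrow> \<not> c \<le> bot"
  by (auto simp: B_atom_def tt_le_iff ff_le_iff)

lemma atom_not_le_uminus_self: "B_atom c \<Longrightarrow> \<not> c \<le> - c"
  using atom_le_uminus_iff[of c c] by simp

lemma atom_inf_const: "B_atom c \<Longrightarrow> inf a c = (if c \<le> a then c else bot)"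
  by (cases a) (auto simp: B_atom_def tt_def ff_def Pair_bot_bot[symmetric])

lemma atom_le_Bimp_iff: "B_atom c \<Longrightarrow> c \<le> Bimp a b \<longleftrightarrow> (c \<le> a \<longrightarrow> c \<le> b)"
  by (auto simp: Bimp_def atom_le_sup_iff atom_le_uminus_iff)

lemma atom_le_Bsub_iff: "B_atom c \<Longrightarrow> c \<le> Bsub l m \<longleftrightarrow> (\<forall>x. c \<le> l x \<longrightarrow> c \<le> m x)"
  by (simp add: Bsub_def le_INF_iff atom_le_Bimp_iff)

lemma atom_le_Bspec_iff:
  "B_atom c \<Longrightarrow> c \<le> Bspec T x y \<longleftrightarrow> (\<forall>l\<in>T. c \<le> l x \<longrightarrow> c \<le> l y)"
  by (simp add: Bspec_def le_INF_iff atom_le_Bimp_iff)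

lemma B_eq_iff_atom: "B_atom c \<Longrightarrow> (a::B) = b \<longleftrightarrow> (c \<le> a \<longleftrightarrow> c \<le> b) \<and> (- c \<le> a \<longleftrightarrow> - c \<le> b)"
  by (cases a; cases b) (auto simp: B_atom_def tt_def ff_def)

lemma B_le_iff_atom: "B_atom c \<Longrightarrow> (a::B) \<le> b \<longleftrightarrow> (c \<le> a \<longrightarrow> c \<le> b) \<and> (- c \<le> a \<longrightarrow> - c \<le> b)"
  by (cases a; cases b) (auto simp: B_atom_def tt_def ff_def)

lemma B_eqI_atoms: "(\<And>c. B_atom c \<Longrightarrow> c \<le> a \<longleftrightarrow> c \<le> b) \<Longrightarrow> (a::B) = b"
  using B_eq_iff_atom[OF B_atom_tt] B_atom_uminus[OF B_atom_tt] B_atom_tt by blast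

lemma B_leI_atoms: "(\<And>c. B_atom c \<Longrightarrow> c \<le> a \<Longrightarrow> c \<le> b) \<Longrightarrow> (a::B) \<le> b"
  using B_le_iff_atom[OF B_atom_tt] B_atom_uminus[OF B_atom_tt] B_atom_tt by blast

lemma Bsub_eq_top_imp_le:
  assumes "Bsub \<theta> \<mu> = top"
  shows "\<theta> \<le> \<mu>"
proof (rule le_funI, rule B_leI_atoms)
  fix x c assume "B_atom c" "c \<le> \<theta> x"
  moreover have "c \<le> Bsub \<theta> \<mu>" using assms by simp
  ultimately show "c \<le> \<mu> x" by (simp add: atom_le_Bsub_iff)
qed

lemma is_Btop_const: "is_Btop T \<Longrightarrow> (\<lambda>_. b) \<in> T"
  unfolding is_Btop_def by blast

lemma is_Btop_Sup: "is_Btop T \<Longrightarrow> S \<subseteq> T \<Longrightarrow> Sup S \<in> T"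
  by (simp add: is_Btop_def)

lemma is_Btop_inf: "is_Btop T \<Longrightarrow> l \<in> T \<Longrightarrow> m \<in> T \<Longrightarrow> inf l m \<in> T"
  by (simp add: is_Btop_def)

lemma is_Btop_sup: "is_Btop T \<Longrightarrow> l \<in> T \<Longrightarrow> m \<in> T \<Longrightarrow> sup l m \<in> T"
  using is_Btop_Sup[of T "{l, m}"] by simp

lemma Bfilter_const: "Bfilter T F \<Longrightarrow> F (\<lambda>_. b) = b"
  unfolding Bfilter_def by blast

lemma Bfilter_inf: "Bfilter T F \<Longrightarrow> l \<in> T \<Longrightarrow> m \<in> T \<Longrightarrow> F (inf l m) = inf (F l) (F m)"
  by (simp add: Bfilter_def)

lemma Bfilter_mono: "Bfilter T F \<Longrightarrow> l \<in> T \<Longrightarrow> m \<in> T \<Longrightarrow> l \<le> m \<Longrightarrow> F l \<le> F m"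
  using Bfilter_inf[of T F l m] by (metis inf.absorb1 inf.cobounded2)

lemma Bfilter_Bsub:
  assumes "Binhabited \<theta>"
  shows "Bfilter T (Bsub \<theta>)"
proof -
  have "\<exists>x. c \<le> \<theta> x" if "B_atom c" for c
    using assms that atom_le_SUP_iff[of c \<theta> UNIV] by (simp add: Binhabited_def)
  then have "Bsub \<theta> (\<lambda>_. b) = b" for b
    by (intro B_eqI_atoms) (auto simp: atom_le_Bsub_iff)
  moreover have "Bsub \<theta> (inf l m) = inf (Bsub \<theta> l) (Bsub \<theta> m)" for l m
    by (intro B_eqI_atoms) (auto simp: atom_le_Bsub_iff)
  ultimately show ?thesis by (simp add: Bfilter_def)
qed

lemma Bscott_open_filter_Bsub:
  "Binhabited \<theta> \<Longrightarrow> Bcompact T \<theta> \<Longrightarrow> Bscott_open_filter T (Bsub \<theta>)"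
  by (simp add: Bscott_open_filter_def Bfilter_Bsub Bcompact_def)

lemma Bsaturated_separate_atom:
  assumes top: "is_Btop T" and sat: "Bsaturated T \<theta>"
    and c: "B_atom c" and x: "\<not> c \<le> \<theta> x"
  obtains L where "L \<in> T" "\<forall>y. c \<le> \<theta> y \<longrightarrow> c \<le> L y" "\<not> c \<le> L x"
proof -
  have "\<exists>l\<in>T. c \<le> l y \<and> \<not> c \<le> l x" if y: "c \<le> \<theta> y" for y
  proof -
    have "\<not> c \<le> Bimp (\<theta> y) (\<theta> x)" using x y c by (simp add: atom_le_Bimp_iff)
    moreover have "Bspec T y x \<le> Bimp (\<theta> y) (\<theta> x)" using sat by (simp add: Bsaturated_def)
    ultimately have "\<not> c \<le> Bspec T y x" by (meson order_trans)
    then show ?thesis using c by (auto simp: atom_le_Bspec_iff)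
  qed
  then obtain g where g: "\<And>y. c \<le> \<theta> y \<Longrightarrow> g y \<in> T \<and> c \<le> g y y \<and> \<not> c \<le> g y x"
    by metis
  define L where "L = Sup (g ` {y. c \<le> \<theta> y})"
  have L_iff: "c \<le> L z \<longleftrightarrow> (\<exists>y. c \<le> \<theta> y \<and> c \<le> g y z)" for z
    unfolding L_def Sup_apply image_image atom_le_SUP_iff[OF c] by simp
  have "L \<in> T" unfolding L_def using g by (intro is_Btop_Sup[OF top]) auto
  moreover have "\<forall>y. c \<le> \<theta> y \<longrightarrow> c \<le> L y" using L_iff g by blast
  moreover have "\<not> c \<le> L x" using L_iff g by blast
  ultimately show thesis by (rule that)
qed

lemma Bsub_Bsaturated_eq_INF:
  assumes top: "is_Btop T" and sat: "Bsaturated T \<theta>1"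
  shows "Bsub \<theta>2 \<theta>1 = (INF l\<in>T. Bimp (Bsub \<theta>1 l) (Bsub \<theta>2 l))"
proof (rule B_eqI_atoms)
  fix c assume c: "B_atom c"
  have "(\<forall>x. c \<le> \<theta>2 x \<longrightarrow> c \<le> \<theta>1 x) \<longleftrightarrow>
        (\<forall>l\<in>T. (\<forall>x. c \<le> \<theta>1 x \<longrightarrow> c \<le> l x) \<longrightarrow> (\<forall>x. c \<le> \<theta>2 x \<longrightarrow> c \<le> l x))"
  proof (intro iffI ballI impI allI)
    fix l x assume "\<forall>x. c \<le> \<theta>2 x \<longrightarrow> c \<le> \<theta>1 x" "\<forall>x. c \<le> \<theta>1 x \<longrightarrow> c \<le> l x"
      "c \<le> \<theta>2 x"
    then show "c \<le> l x" by blast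
  next
    fix x assume R: "\<forall>l\<in>T. (\<forall>x. c \<le> \<theta>1 x \<longrightarrow> c \<le> l x) \<longrightarrow> (\<forall>x. c \<le> \<theta>2 x \<longrightarrow> c \<le> l x)"
      and x: "c \<le> \<theta>2 x"
    show "c \<le> \<theta>1 x"
    proof (rule ccontr)
      assume "\<not> c \<le> \<theta>1 x"
      then obtain L where "L \<in> T" "\<forall>y. c \<le> \<theta>1 y \<longrightarrow> c \<le> L y" "\<not> c \<le> L x"
        by (rule Bsaturated_separate_atom[OF top sat c])
      then show False using R x by blast
    qed
  qed
  then show "c \<le> Bsub \<theta>2 \<theta>1 \<longleftrightarrow> c \<le> (INF l\<in>T. Bimp (Bsub \<theta>1 l) (Bsub \<theta>2 l))"
    using c by (simp add: le_INF_iff atom_le_Bimp_iff atom_le_Bsub_iff)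
qed

lemma Bfilter_atom_not_le:
  assumes top: "is_Btop T" and fil: "Bfilter T F" and c: "B_atom c"
    and mT: "m \<in> T" and PT: "P \<in> T" and cm: "c \<le> F m" and nP: "\<not> c \<le> F P"
  shows "\<exists>x. c \<le> m x \<and> \<not> c \<le> P x"
proof (rule ccontr)
  assume "\<not> ?thesis"
  then have "inf m (\<lambda>_. c) \<le> P"
    by (intro le_funI) (simp add: atom_inf_const[OF c])
  then have "F (inf m (\<lambda>_. c)) \<le> F P"
    by (intro Bfilter_mono[OF fil] is_Btop_inf[OF top] mT PT is_Btop_const[OF top])
  moreover have "F (inf m (\<lambda>_. c)) = inf (F m) c"
    using Bfilter_inf[OF fil mT is_Btop_const[OF top]] Bfilter_const[OF fil] by simp
  moreover have "inf (F m) c = c" using cm by (rule inf_absorb2)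
  ultimately show False using nP by simp
qed

lemma Bscott_open_filter_maximal_avoiding:
  assumes top: "is_Btop T" and so: "Bscott_open_filter T F" and c: "B_atom c"
    and lT: "l \<in> T" and nl: "\<not> c \<le> F l"
  shows "\<exists>P\<in>T. l \<le> P \<and> \<not> c \<le> F P \<and> (\<forall>Q\<in>T. P \<le> Q \<longrightarrow> \<not> c \<le> F Q \<longrightarrow> Q = P)"
proof -
  define S where "S = {m\<in>T. l \<le> m \<and> \<not> c \<le> F m}"
  have "\<exists>P\<in>S. \<forall>a\<in>S. P \<le> a \<longrightarrow> a = P"
  proof (rule predicate_Zorn)
    show "partial_order_on S (relation_of (\<le>) S)"
      by (rule partial_order_on_relation_ofI) auto
  next
    fix C assume "C \<in> Chains (relation_of (\<le>) S)"
    then have CS: "C \<subseteq> S" and Ctot: "\<And>a b. a \<in> C \<Longrightarrow> b \<in> C \<Longrightarrow> a \<le> b \<or> b \<le> a"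
      unfolding Chains_def relation_of_def by auto
    show "\<exists>u\<in>S. \<forall>a\<in>C. a \<le> u"
    proof (cases "C = {}")
      case True
      then show ?thesis using lT nl by (auto simp: S_def)
    next
      case False
      have CT: "C \<subseteq> T" using CS by (auto simp: S_def)
      have "directed C" unfolding directed_def using False Ctot by blast
      then have "F (Sup C) = (SUP m\<in>C. F m)"
        using so CT by (simp add: Bscott_open_filter_def)
      then have "\<not> c \<le> F (Sup C)" using CS by (auto simp: atom_le_SUP_iff[OF c] S_def)
      moreover have "Sup C \<in> T" using is_Btop_Sup[OF top CT] .
      moreover have "l \<le> Sup C"
        using False CS by (auto simp: S_def intro: order_trans Sup_upper)
      ultimately show ?thesis by (auto simp: S_def intro: Sup_upper)
    qed
  qed
  then show ?thesis by (auto simp: S_def intro: order_trans)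
qed

text \<open>Enlarging \<open>P\<close> by \<open>V \<sqinter> c\<close> and by \<open>W \<sqinter> c\<close> gives opens in \<open>F\<close> by maximality; if
  \<open>V\<close> and \<open>W\<close> did not meet the complement of \<open>P\<close> jointly, their meet would be \<open>P\<close>.\<close>

lemma maximal_avoiding_prime:
  assumes top: "is_Btop T" and fil: "Bfilter T F" and c: "B_atom c"
    and PT: "P \<in> T" and nP: "\<not> c \<le> F P"
    and Pmax: "\<forall>Q\<in>T. P \<le> Q \<longrightarrow> \<not> c \<le> F Q \<longrightarrow> Q = P"
    and VT: "V \<in> T" and WT: "W \<in> T"
    and x1: "c \<le> V x1" "\<not> c \<le> P x1" and x2: "c \<le> W x2" "\<not> c \<le> P x2"
  shows "\<exists>x. c \<le> V x \<and> c \<le> W x \<and> \<not> c \<le> P x"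
proof (rule ccontr)
  assume "\<not> ?thesis"
  then have VW: "\<And>x. c \<le> V x \<Longrightarrow> c \<le> W x \<Longrightarrow> c \<le> P x" by blast
  define enlarge where "enlarge U = sup P (inf U (\<lambda>_. c))" for U
  have enlarge_open: "enlarge U \<in> T" if "U \<in> T" for U
    unfolding enlarge_def
    by (intro is_Btop_sup[OF top] is_Btop_inf[OF top] PT that is_Btop_const[OF top])
  have enlarge_in_F: "c \<le> F (enlarge U)" if UT: "U \<in> T" and y: "c \<le> U y" "\<not> c \<le> P y" for U y
  proof (rule ccontr)
    assume "\<not> ?thesis"
    moreover have "P \<le> enlarge U" by (simp add: enlarge_def)
    ultimately have "enlarge U = P" using Pmax enlarge_open[OF UT] by blast
    moreover have "c \<le> enlarge U y" using y by (simp add: enlarge_def le_supI2)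
    ultimately show False using y by simp
  qed
  have "inf (enlarge V) (enlarge W) = P"
  proof (rule antisym)
    show "inf (enlarge V) (enlarge W) \<le> P"
    proof (rule le_funI)
      fix x
      show "inf (enlarge V) (enlarge W) x \<le> P x"
        unfolding enlarge_def inf_apply sup_apply
        using VW[of x] c B_atom_uminus[OF c] atom_not_le_uminus_self[OF B_atom_uminus[OF c]]
        by (subst B_le_iff_atom[OF c]) (auto simp: atom_le_sup_iff)
    qed
  qed (simp add: enlarge_def)
  then have "F P = inf (F (enlarge V)) (F (enlarge W))"
    using Bfilter_inf[OF fil enlarge_open[OF VT] enlarge_open[OF WT]] by simp
  then show False using nP enlarge_in_F[OF VT x1] enlarge_in_F[OF WT x2] by simp
qed

lemma ex_Bpoint_prime_complement:
  fixes P :: "'a \<Rightarrow> B"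
  assumes c: "B_atom c" and out: "\<exists>x. \<not> c \<le> P x"
    and prime: "\<And>V W x1 x2. V \<in> T \<Longrightarrow> W \<in> T \<Longrightarrow> c \<le> V x1 \<Longrightarrow> \<not> c \<le> P x1 \<Longrightarrow>
      c \<le> W x2 \<Longrightarrow> \<not> c \<le> P x2 \<Longrightarrow> \<exists>x. c \<le> V x \<and> c \<le> W x \<and> \<not> c \<le> P x"
  shows "\<exists>p. Bpoint T p \<and> (\<forall>V. c \<le> p V \<longleftrightarrow> (\<exists>x. c \<le> V x \<and> \<not> c \<le> P x))"
proof -
  have c': "B_atom (- c)" using B_atom_uminus[OF c] .
  txt \<open>At level \<open>- c\<close> any evaluation map will do.\<close>
  define p where "p V = sup (inf c (SUP x. inf (V x) (- P x))) (inf (- c) (V undefined))"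
    for V :: "'a \<Rightarrow> B"
  have pc: "c \<le> p V \<longleftrightarrow> (\<exists>x. c \<le> V x \<and> \<not> c \<le> P x)" for V
    unfolding p_def using c atom_not_le_uminus_self[OF c]
    by (simp add: atom_le_sup_iff atom_le_SUP_iff atom_le_uminus_iff)
  have pd: "- c \<le> p V \<longleftrightarrow> - c \<le> V undefined" for V
    unfolding p_def using c' atom_not_le_uminus_self[OF c'] by (simp add: atom_le_sup_iff)
  have p_eq: "p V = b \<longleftrightarrow>
      ((\<exists>x. c \<le> V x \<and> \<not> c \<le> P x) \<longleftrightarrow> c \<le> b) \<and> (- c \<le> V undefined \<longleftrightarrow> - c \<le> b)" for V b
    using B_eq_iff_atom[OF c, of "p V" b] pc pd by simp
  have "Bpoint T p"
    unfolding Bpoint_def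
  proof (intro conjI allI impI)
    fix b :: B show "p (\<lambda>_. b) = b" using p_eq out by auto
  next
    fix V W assume "V \<in> T" "W \<in> T"
    then show "p (inf V W) = inf (p V) (p W)"
      using prime[of V W] by (auto simp: p_eq pc pd)
  next
    fix Q :: "('a \<Rightarrow> B) set"
    have Sup_iff: "d \<le> Sup Q x \<longleftrightarrow> (\<exists>l\<in>Q. d \<le> l x)" if "B_atom d" for d x
      using that by (simp add: atom_le_SUP_iff)
    have "(\<exists>x. c \<le> Sup Q x \<and> \<not> c \<le> P x) \<longleftrightarrow> (\<exists>l\<in>Q. c \<le> p l)"
      unfolding Sup_iff[OF c] pc by blast
    moreover have "- c \<le> Sup Q undefined \<longleftrightarrow> (\<exists>l\<in>Q. - c \<le> p l)"
      unfolding Sup_iff[OF c'] pd ..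
    ultimately show "p (Sup Q) = (SUP l\<in>Q. p l)"
      unfolding p_eq atom_le_SUP_iff[OF c] atom_le_SUP_iff[OF c'] by blast
  qed
  then show ?thesis using pc by blast
qed

lemma maximal_avoiding_Bpoint:
  assumes top: "is_Btop T" and fil: "Bfilter T F" and c: "B_atom c"
    and PT: "P \<in> T" and nP: "\<not> c \<le> F P"
    and Pmax: "\<forall>Q\<in>T. P \<le> Q \<longrightarrow> \<not> c \<le> F Q \<longrightarrow> Q = P"
  shows "\<exists>p. Bpoint T p \<and> (\<forall>V. c \<le> p V \<longleftrightarrow> (\<exists>x. c \<le> V x \<and> \<not> c \<le> P x))"
proof -
  have "\<exists>x. \<not> c \<le> P x"
  proof (rule ccontr)
    assume "\<not> ?thesis"
    then have "F (\<lambda>_. c) \<le> F P"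
      by (intro Bfilter_mono[OF fil is_Btop_const[OF top] PT]) (simp add: le_fun_def)
    then show False using nP by (simp add: Bfilter_const[OF fil])
  qed
  then show ?thesis
    by (rule ex_Bpoint_prime_complement[OF c])
      (rule maximal_avoiding_prime[OF top fil c PT nP Pmax]; assumption)
qed

lemma Bsober_Bscott_open_filter_atom_le:
  assumes top: "is_Btop T" and sob: "Bsober T" and so: "Bscott_open_filter T F"
    and c: "B_atom c" and lT: "l \<in> T"
    and H: "\<And>x. (\<forall>m\<in>T. c \<le> F m \<longrightarrow> c \<le> m x) \<Longrightarrow> c \<le> l x"
  shows "c \<le> F l"
proof (rule ccontr)
  assume "\<not> c \<le> F l"
  then obtain P where PT: "P \<in> T" and lP: "l \<le> P" and nP: "\<not> c \<le> F P"
    and Pmax: "\<forall>Q\<in>T. P \<le> Q \<longrightarrow> \<not> c \<le> F Q \<longrightarrow> Q = P"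
    using Bscott_open_filter_maximal_avoiding[OF top so c lT] by blast
  have fil: "Bfilter T F" using so by (simp add: Bscott_open_filter_def)
  have "\<exists>p. Bpoint T p \<and> (\<forall>V. c \<le> p V \<longleftrightarrow> (\<exists>x. c \<le> V x \<and> \<not> c \<le> P x))"
    by (rule maximal_avoiding_Bpoint[OF top fil c PT nP Pmax])
  then obtain p where "Bpoint T p" and pc: "\<forall>V. c \<le> p V \<longleftrightarrow> (\<exists>x. c \<le> V x \<and> \<not> c \<le> P x)"
    by blast
  then obtain z where pz: "\<forall>V\<in>T. p V = V z"
    using sob unfolding Bsober_def by blast
  have z: "c \<le> V z \<longleftrightarrow> (\<exists>x. c \<le> V x \<and> \<not> c \<le> P x)" if "V \<in> T" for V
    using pc pz that by (metis (no_types))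
  have "c \<le> m z" if "m \<in> T" "c \<le> F m" for m
    unfolding z[OF that(1)] by (rule Bfilter_atom_not_le[where P = P, OF top fil c that(1) PT that(2) nP])
  then have "c \<le> P z" using H lP by (meson le_funD order_trans)
  then show False using z[OF PT] by blast
qed

definition Bkernel :: "('a \<Rightarrow> B) set \<Rightarrow> (('a \<Rightarrow> B) \<Rightarrow> B) \<Rightarrow> 'a \<Rightarrow> B" where
  "Bkernel T F x = (INF m\<in>T. Bimp (F m) (m x))"

lemma atom_le_Bkernel_iff:
  "B_atom c \<Longrightarrow> c \<le> Bkernel T F x \<longleftrightarrow> (\<forall>m\<in>T. c \<le> F m \<longrightarrow> c \<le> m x)"
  by (simp add: Bkernel_def le_INF_iff atom_le_Bimp_iff)

lemma Bsaturated_Bkernel: "Bsaturated T (Bkernel T F)"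
  unfolding Bsaturated_def
proof (intro allI)
  fix x y
  show "Bspec T x y \<le> Bimp (Bkernel T F x) (Bkernel T F y)"
    by (rule B_leI_atoms) (auto simp: atom_le_Bspec_iff atom_le_Bimp_iff atom_le_Bkernel_iff)
qed

lemma Bsub_Bkernel:
  assumes top: "is_Btop T" and sob: "Bsober T" and so: "Bscott_open_filter T F" and lT: "l \<in> T"
  shows "Bsub (Bkernel T F) l = F l"
proof (rule B_eqI_atoms)
  fix c assume c: "B_atom c"
  show "c \<le> Bsub (Bkernel T F) l \<longleftrightarrow> c \<le> F l"
    unfolding atom_le_Bsub_iff[OF c] atom_le_Bkernel_iff[OF c]
    using Bsober_Bscott_open_filter_atom_le[OF top sob so c lT] lT by blast
qed

lemma Binhabited_Bkernel:
  assumes top: "is_Btop T" and sob: "Bsober T" and so: "Bscott_open_filter T F"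
  shows "Binhabited (Bkernel T F)"
proof -
  have "Bsub (Bkernel T F) (\<lambda>_. bot) = bot"
    using Bsub_Bkernel[OF top sob so is_Btop_const[OF top]] so Bfilter_const[of T F]
    by (simp add: Bscott_open_filter_def)
  then have "\<exists>x. c \<le> Bkernel T F x" if "B_atom c" for c
    using atom_le_Bsub_iff[OF that, of "Bkernel T F" "\<lambda>_. bot"] atom_not_le_bot[OF that]
    by auto
  then show ?thesis
    unfolding Binhabited_def by (intro B_eqI_atoms) (simp add: atom_le_SUP_iff)
qed

lemma Bcompact_Bkernel:
  assumes top: "is_Btop T" and sob: "Bsober T" and so: "Bscott_open_filter T F"
  shows "Bcompact T (Bkernel T F)"
  unfolding Bcompact_def
proof (intro allI impI)
  fix L assume LT: "L \<subseteq> T" and dir: "directed L"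
  note Bsub_eq = Bsub_Bkernel[OF top sob so]
  have "Bsub (Bkernel T F) (Sup L) = F (Sup L)" using Bsub_eq[OF is_Btop_Sup[OF top LT]] .
  also have "\<dots> = (SUP l\<in>L. F l)" using so LT dir by (simp add: Bscott_open_filter_def)
  also have "\<dots> = (SUP l\<in>L. Bsub (Bkernel T F) l)" using Bsub_eq LT by (intro SUP_cong) auto
  finally show "Bsub (Bkernel T F) (Sup L) = (SUP l\<in>L. Bsub (Bkernel T F) l)" .
qed

lemma Bsaturated_eqI_Bsub:
  assumes top: "is_Btop T" and sat: "Bsaturated T \<theta>" "Bsaturated T \<theta>'"
    and eq: "\<And>l. l \<in> T \<Longrightarrow> Bsub \<theta> l = Bsub \<theta>' l"
  shows "\<theta> = \<theta>'"
proof -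
  have "\<theta>2 \<le> \<theta>1" if "Bsaturated T \<theta>1" "\<And>l. l \<in> T \<Longrightarrow> Bsub \<theta>1 l = Bsub \<theta>2 l" for \<theta>1 \<theta>2
  proof (rule Bsub_eq_top_imp_le)
    have "Bsub \<theta>2 \<theta>1 = (INF l\<in>T. Bimp (Bsub \<theta>1 l) (Bsub \<theta>2 l))"
      by (rule Bsub_Bsaturated_eq_INF[OF top that(1)])
    also have "\<dots> = top" using that(2) by (simp add: Bimp_def)
    finally show "Bsub \<theta>2 \<theta>1 = top" .
  qed
  then show ?thesis using sat eq by (metis antisym)
qed

theorem mainTheorem1:
  fixes \<tau> :: "('a \<Rightarrow> B) set"
  assumes top: "is_Btop \<tau>"
  shows "(\<forall>\<theta>. Binhabited \<theta> \<and> Bsaturated \<tau> \<theta> \<and> Bcompact \<tau> \<theta> \<longrightarrow>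
            Bscott_open_filter \<tau> (Bsub \<theta>))
       \<and> (\<forall>\<theta>1 \<theta>2.
            Binhabited \<theta>1 \<and> Bsaturated \<tau> \<theta>1 \<and> Bcompact \<tau> \<theta>1 \<and>
            Binhabited \<theta>2 \<and> Bsaturated \<tau> \<theta>2 \<and> Bcompact \<tau> \<theta>2 \<longrightarrow>
            Bsub \<theta>2 \<theta>1 = (INF l\<in>\<tau>. Bimp (Bsub \<theta>1 l) (Bsub \<theta>2 l)))
       \<and> (Bsober \<tau> \<longrightarrow>
           (\<forall>F. Bscott_open_filter \<tau> F \<longrightarrow>
              (\<exists>!\<theta>. Binhabited \<theta> \<and> Bsaturated \<tau> \<theta> \<and> Bcompact \<tau> \<theta> \<and>
                     (\<forall>l\<in>\<tau>. F l = Bsub \<theta> l))))"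
proof (intro conjI allI impI)
  fix \<theta> assume "Binhabited \<theta> \<and> Bsaturated \<tau> \<theta> \<and> Bcompact \<tau> \<theta>"
  then show "Bscott_open_filter \<tau> (Bsub \<theta>)" by (simp add: Bscott_open_filter_Bsub)
next
  fix \<theta>1 \<theta>2 :: "'a \<Rightarrow> B"
  assume "Binhabited \<theta>1 \<and> Bsaturated \<tau> \<theta>1 \<and> Bcompact \<tau> \<theta>1 \<and>
    Binhabited \<theta>2 \<and> Bsaturated \<tau> \<theta>2 \<and> Bcompact \<tau> \<theta>2"
  then show "Bsub \<theta>2 \<theta>1 = (INF l\<in>\<tau>. Bimp (Bsub \<theta>1 l) (Bsub \<theta>2 l))"
    by (simp add: Bsub_Bsaturated_eq_INF[OF top])
next
  fix F assume sob: "Bsober \<tau>" and so: "Bscott_open_filter \<tau> F"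
  show "\<exists>!\<theta>. Binhabited \<theta> \<and> Bsaturated \<tau> \<theta> \<and> Bcompact \<tau> \<theta> \<and> (\<forall>l\<in>\<tau>. F l = Bsub \<theta> l)"
  proof (rule ex1I)
    show "Binhabited (Bkernel \<tau> F) \<and> Bsaturated \<tau> (Bkernel \<tau> F) \<and> Bcompact \<tau> (Bkernel \<tau> F) \<and>
        (\<forall>l\<in>\<tau>. F l = Bsub (Bkernel \<tau> F) l)"
      using Binhabited_Bkernel[OF top sob so] Bsaturated_Bkernel Bcompact_Bkernel[OF top sob so]
        Bsub_Bkernel[OF top sob so] by simp
  next
    fix \<theta> assume "Binhabited \<theta> \<and> Bsaturated \<tau> \<theta> \<and> Bcompact \<tau> \<theta> \<and> (\<forall>l\<in>\<tau>. F l = Bsub \<theta> l)"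
    then show "\<theta> = Bkernel \<tau> F"
      using Bsub_Bkernel[OF top sob so] Bsaturated_Bkernel
      by (intro Bsaturated_eqI_Bsub[OF top]) auto
  qed
qed

end
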